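(* Let $\varphi$ be a rational self-map of $\mathbb{D}$ having order of contact $n$ (even) with $\partial\mathbb{D}$ at $\zeta\in\partial\mathbb{D}$. Then $D_{n-1}(\varphi,\zeta)=D_{n-1}(\varphi_e,\zeta)$ and $\varphi^{(n)}(\zeta)\neq\varphi_e^{(n)}(\zeta)$.
   Context: $\varphi_e=\rho\circ\varphi\circ\rho$ with $\rho(z)=1/\bar z$. For $h$ analytic at $z$, $D_k(h,z)=(h(z),h'(z),\dots,h^{(k)}(z))$. Order of contact $n$ at $\zeta$: $\varphi(\zeta)\in\partial\mathbb{D}$ and $\frac{1-|\varphi(e^{i\theta})|^2}{|\varphi(\zeta)-\varphi(e^{i\theta})|^n}$ is bounded above and away from zero as $e^{i\theta}\to\zeta$. *)

theory Defs
  imports "HOL-Analysis.Analysis" "HOL-Computational_Algebra.Polynomial_Factorial"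
begin

definition rho :: "complex \<Rightarrow> complex" where
  "rho z = 1 / cnj z"

definition phi_e :: "(complex \<Rightarrow> complex) \<Rightarrow> complex \<Rightarrow> complex" where
  "phi_e \<phi> = rho \<circ> \<phi> \<circ> rho"

definition Dvec :: "nat \<Rightarrow> (complex \<Rightarrow> complex) \<Rightarrow> complex \<Rightarrow> complex list" where
  "Dvec k h z = map (\<lambda>j. (deriv ^^ j) h z) [0..<Suc k]"

definition rational_selfmap_disc :: "(complex \<Rightarrow> complex) \<Rightarrow> bool" where
  "rational_selfmap_disc \<phi> \<longleftrightarrow>
     (\<exists>p q :: complex poly. coprime p q \<and> (\<forall>z. \<phi> z = poly p z / poly q z) \<and>
        (\<forall>z\<in>ball 0 1. poly q z \<noteq> 0 \<and> \<phi> z \<in> ball 0 1))"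

definition order_of_contact :: "(complex \<Rightarrow> complex) \<Rightarrow> nat \<Rightarrow> complex \<Rightarrow> bool" where
  "order_of_contact \<phi> n \<zeta> \<longleftrightarrow> norm (\<phi> \<zeta>) = 1 \<and>
     (\<exists>c C. 0 < c \<and> 0 < C \<and>
        (\<forall>\<^sub>F w in at \<zeta> within sphere 0 1.
           c \<le> (1 - (norm (\<phi> w))\<^sup>2) / (norm (\<phi> \<zeta> - \<phi> w)) ^ n \<and>
           (1 - (norm (\<phi> w))\<^sup>2) / (norm (\<phi> \<zeta> - \<phi> w)) ^ n \<le> C))"

end

(*
  The reflected map \<phi>_e = 1 / cnj \<phi> agrees with \<phi> wherever |\<phi>| = 1, in particular at \<zeta>,
  and on the unit circle |\<phi> - \<phi>_e| = (1 - |\<phi>|^2) / |\<phi>|.  Near \<zeta> the function \<phi> - \<phi> \<zeta>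
  has a simple zero: a zero of order m \<ge> 2 would let a suitable path entering the disc at \<zeta> be
  mapped out of the disc.  Hence |\<phi> \<zeta> - \<phi> w| is comparable with |w - \<zeta>|, and the two-sided
  contact bound on the circle forces the order of contact n to be exactly the order of the zero
  of the holomorphic function \<phi> - \<phi>_e at \<zeta>.  So its derivatives of order < n vanish at \<zeta>
  and the n-th does not.
*)
theory Submission
  imports Defs "HOL-Complex_Analysis.Complex_Analysis"
begin

lemma at_within_sphere_nontrivial:
  fixes a :: complex
  assumes "r > 0" "\<zeta> \<in> sphere a r"
  shows "at \<zeta> within sphere a r \<noteq> bot"
proof -
  have "sphere a r \<noteq> {x}" for x
  proof
    assume "sphere a r = {x}"
    moreover have "a + of_real r \<in> sphere a r" "a - of_real r \<in> sphere a r"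
      using \<open>r > 0\<close> by (auto simp: dist_norm)
    ultimately show False
      using \<open>r > 0\<close> by auto
  qed
  then have "\<zeta> islimpt sphere a r"
    by (intro connected_imp_perfect[OF _ assms(2)] connected_sphere) auto
  then show ?thesis
    using trivial_limit_within by blast
qed

lemma one_div_cnj_of_norm_1:
  fixes w :: complex
  assumes "norm w = 1"
  shows "1 / cnj w = w"
proof -
  have "w * cnj w = 1" "cnj w \<noteq> 0"
    using assms complex_norm_square[of w] by auto
  then show ?thesis
    by (simp add: field_simps)
qed

lemma norm_mult_norm_sub_one_div_cnj:
  fixes a :: complex
  assumes "a \<noteq> 0"
  shows "norm a * norm (a - 1 / cnj a) = \<bar>1 - (norm a)\<^sup>2\<bar>"
proof -
  have "a - 1 / cnj a = (a * cnj a - 1) / cnj a"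
    using assms by (simp add: field_simps)
  also have "a * cnj a - 1 = of_real ((norm a)\<^sup>2 - 1)"
    using complex_norm_square[of a] by simp
  finally have "norm (a - 1 / cnj a) = \<bar>(norm a)\<^sup>2 - 1\<bar> / norm a"
    by (simp only: norm_divide norm_of_real complex_mod_cnj)
  then show ?thesis
    using assms by (simp add: abs_minus_commute)
qed

lemma phi_e_on_sphere:
  assumes "norm w = 1"
  shows "phi_e \<phi> w = 1 / cnj (\<phi> w)"
  using one_div_cnj_of_norm_1[OF assms] by (simp add: phi_e_def rho_def)

lemma norm_1_minus_of_real_mult_lt_1:
  fixes v :: complex
  assumes "norm v = 1" "0 < t" "t < 2 * Re v"
  shows "norm (1 - of_real t * v) < 1"
proof -
  have v: "(Re v)\<^sup>2 + (Im v)\<^sup>2 = 1"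
    using assms(1) cmod_power2[of v] by simp
  have "(norm (1 - of_real t * v))\<^sup>2 = (1 - t * Re v)\<^sup>2 + (t * Im v)\<^sup>2"
    by (simp add: cmod_power2)
  also have "\<dots> = 1 - t * (2 * Re v - t)"
    using v by algebra
  also have "\<dots> < 1"
    using assms(2,3) by simp
  finally show ?thesis
    by (simp add: power_less_one_iff)
qed

lemma norm_add_gt_1_if_Re_cnj_mult_pos:
  fixes b d :: complex
  assumes "norm b = 1" "Re (cnj b * d) > 0"
  shows "norm (b + d) > 1"
proof -
  have "b * cnj b = 1"
    using complex_norm_square[of b] assms(1) by simp
  then have "b + d = b * (1 + cnj b * d)"
    by (simp add: algebra_simps)
  then have "norm (b + d) = norm (1 + cnj b * d)"
    using assms(1) by (simp add: norm_mult)
  also have "\<dots> \<ge> Re (1 + cnj b * d)"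
    by (rule complex_Re_le_cmod)
  finally show ?thesis
    using assms(2) by simp
qed

lemma isCont_if_holomorphic_on_ball:
  assumes "f holomorphic_on ball z r" "0 < r"
  shows "isCont f z"
  using assms by (intro continuous_on_interior[OF holomorphic_on_imp_continuous_on]) auto

lemma higher_deriv_power_factor:
  fixes f g :: "complex \<Rightarrow> complex"
  assumes "r > 0" "g holomorphic_on ball z r"
    and fac: "\<And>w. w \<in> ball z r \<Longrightarrow> f w = (w - z) ^ k * g w"
  shows "(deriv ^^ i) f z = (if k \<le> i then of_nat (i choose k) * fact k * (deriv ^^ (i - k)) g z else 0)"
proof -
  have "eventually (\<lambda>w. w \<in> ball z r) (nhds z)"
    using \<open>r > 0\<close> by (intro eventually_nhds_in_open) auto
  then have "eventually (\<lambda>w. f w = (w - z) ^ k * g w) (nhds z)"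
    using fac by (rule eventually_mono)
  then have "(deriv ^^ i) f z = (deriv ^^ i) (\<lambda>w. (w - z) ^ k * g w) z"
    by (rule higher_deriv_cong_ev) simp
  also have "\<dots> = (\<Sum>j=0..i. of_nat (i choose j) * (deriv ^^ j) (\<lambda>w. (w - z) ^ k) z * (deriv ^^ (i - j)) g z)"
    using assms by (intro higher_deriv_mult[of _ "ball z r"]) (auto intro!: holomorphic_intros)
  also have "\<dots> = (\<Sum>j=0..i. if j = k then of_nat (i choose k) * fact k * (deriv ^^ (i - k)) g z else 0)"
  proof (intro sum.cong refl)
    fix j
    have "(deriv ^^ j) (\<lambda>w. (w - z) ^ k) z = pochhammer (of_nat (Suc k - j)) j * 0 ^ (k - j)"
      by (subst higher_deriv_power) simp
    also have "\<dots> = (if j = k then fact j else 0)"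
      by (cases "j < k"; cases "j = k") (auto simp: pochhammer_0_left pochhammer_fact)
    finally show "of_nat (i choose j) * (deriv ^^ j) (\<lambda>w. (w - z) ^ k) z * (deriv ^^ (i - j)) g z =
        (if j = k then of_nat (i choose k) * fact k * (deriv ^^ (i - k)) g z else 0)"
      by simp
  qed
  also have "\<dots> = (if k \<le> i then of_nat (i choose k) * fact k * (deriv ^^ (i - k)) g z else 0)"
    by (subst sum.delta) auto
  finally show ?thesis .
qed

lemma exists_unit_Re_pos_Re_mult_power_pos:
  fixes w :: complex
  assumes "w \<noteq> 0" "m \<ge> 2"
  shows "\<exists>v. norm v = 1 \<and> Re v > 0 \<and> Re (w * v ^ m) > 0"
proof -
  define \<alpha> where "\<alpha> = Arg w"
  \<comment> \<open>for v = cis \<theta>, w v^m has argument \<alpha> / 4, and |\<theta>| \<le> 3 pi / 8 keeps Re v > 0\<close>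
  define \<theta> where "\<theta> = - 3 * \<alpha> / (4 * real m)"
  have \<alpha>: "\<bar>\<alpha>\<bar> \<le> pi"
    using Arg_bounded[of w] by (auto simp: \<alpha>_def)
  have m: "real m \<ge> 2"
    using assms(2) by simp
  have "\<bar>\<theta>\<bar> = 3 * \<bar>\<alpha>\<bar> / (4 * real m)"
    using m by (simp add: \<theta>_def abs_divide abs_mult)
  also have "\<dots> \<le> 3 * pi / (4 * 2)"
    using \<alpha> m by (intro frac_le) auto
  finally have "cos \<theta> > 0"
    using pi_gt_zero by (intro cos_gt_zero_pi) linarith+
  moreover have "w * cis \<theta> ^ m = of_real (norm w) * cis (\<alpha> / 4)"
  proof -
    have "w * cis \<theta> ^ m = of_real (norm w) * (cis \<alpha> * cis (real m * \<theta>))"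
      using assms(1) by (simp add: \<alpha>_def cis_Arg sgn_eq Complex.DeMoivre)
    also have "real m * \<theta> = - 3 * \<alpha> / 4"
      using m by (simp add: \<theta>_def field_simps)
    finally show ?thesis
      by (simp add: cis_mult)
  qed
  moreover have "cos (\<alpha> / 4) > 0"
    using \<alpha> pi_gt_zero by (intro cos_gt_zero_pi) linarith+
  ultimately show ?thesis
    using assms(1) by (intro exI[of _ "cis \<theta>"]) simp
qed

lemma exponents_eq_if_ratio_bounded:
  fixes t G H :: "'a \<Rightarrow> real"
  assumes "F \<noteq> bot" "(t \<longlongrightarrow> 0) F" "eventually (\<lambda>x. t x > 0) F"
    and "(G \<longlongrightarrow> a) F" "(H \<longlongrightarrow> b) F" "a > 0" "b > 0" "c > 0"
    and bounds: "eventually (\<lambda>x. c \<le> t x ^ k * G x / (t x ^ n * H x) \<and>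
                                 t x ^ k * G x / (t x ^ n * H x) \<le> C) F"
  shows "k = n"
proof (rule ccontr)
  have pos: "eventually (\<lambda>x. t x > 0 \<and> G x > 0 \<and> H x > 0) F"
    using assms(3) order_tendstoD(1)[OF assms(4,6)] order_tendstoD(1)[OF assms(5,7)]
    by (intro eventually_conj)
  assume "k \<noteq> n"
  then consider "k < n" | "n < k"
    by linarith
  then have "eventually (\<lambda>x. False) F"
  proof cases
    case 1
    have "((\<lambda>x. C * (t x ^ (n - k) * H x / G x)) \<longlongrightarrow> C * (0 ^ (n - k) * b / a)) F"
      using assms by (intro tendsto_intros) auto
    then have "eventually (\<lambda>x. C * (t x ^ (n - k) * H x / G x) < 1) F"
      using 1 by (intro order_tendstoD(2)) (auto simp: zero_power)
    with bounds pos show ?thesis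
    proof eventually_elim
      case (elim x)
      have "t x ^ n = t x ^ (n - k) * t x ^ k"
        using 1 by (simp flip: power_add)
      then have "t x ^ k * G x / (t x ^ n * H x) * (t x ^ (n - k) * H x / G x) = 1"
        using elim by (simp add: field_simps)
      moreover have "t x ^ k * G x / (t x ^ n * H x) * (t x ^ (n - k) * H x / G x)
          \<le> C * (t x ^ (n - k) * H x / G x)"
        using elim by (intro mult_right_mono) auto
      ultimately show False
        using elim by linarith
    qed
  next
    case 2
    have "((\<lambda>x. t x ^ (k - n) * G x / H x) \<longlongrightarrow> 0 ^ (k - n) * a / b) F"
      using assms by (intro tendsto_intros) auto
    then have "eventually (\<lambda>x. t x ^ (k - n) * G x / H x < c) F"
      using 2 \<open>c > 0\<close> by (intro order_tendstoD(2)) (auto simp: zero_power)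
    with bounds pos show ?thesis
    proof eventually_elim
      case (elim x)
      have "t x ^ k = t x ^ (k - n) * t x ^ n"
        using 2 by (simp flip: power_add)
      then have "t x ^ k * G x / (t x ^ n * H x) = t x ^ (k - n) * G x / H x"
        using elim by (simp add: field_simps)
      then show False
        using elim by linarith
    qed
  qed
  then show False
    using assms(1) by simp
qed

lemma disc_selfmap_boundary_zero_order_eq_1:
  fixes \<phi> h :: "complex \<Rightarrow> complex"
  assumes "norm \<zeta> = 1" "norm (\<phi> \<zeta>) = 1" "r > 0" "0 < m"
    and into_disc: "\<And>z. z \<in> ball \<zeta> r \<Longrightarrow> norm z < 1 \<Longrightarrow> norm (\<phi> z) \<le> 1"
    and fac: "\<And>z. z \<in> ball \<zeta> r \<Longrightarrow> \<phi> z - \<phi> \<zeta> = (z - \<zeta>) ^ m * h z"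
    and "isCont h \<zeta>" "h \<zeta> \<noteq> 0"
  shows "m = 1"
proof (rule ccontr)
  assume "m \<noteq> 1"
  with \<open>0 < m\<close> have "m \<ge> 2"
    by linarith
  define b where "b = \<phi> \<zeta>"
  have "cnj b * h \<zeta> * (- \<zeta>) ^ m \<noteq> 0"
    using assms by (auto simp: b_def)
  then obtain v where v: "norm v = 1" "Re v > 0" "Re (cnj b * h \<zeta> * (- \<zeta>) ^ m * v ^ m) > 0"
    using exists_unit_Re_pos_Re_mult_power_pos[OF _ \<open>m \<ge> 2\<close>] by blast
  \<comment> \<open>z t enters the disc from \<zeta> in direction u, and by the choice of v the term
      (z t - \<zeta>)^m h (z t) points away from the disc at \<phi> \<zeta>\<close>
  define u where "u = - \<zeta> * v"
  define z where "z = (\<lambda>t::real. \<zeta> * (1 - of_real t * v))"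
  define A where "A = (\<lambda>t. cnj b * h (z t) * u ^ m)"
  have "(z \<longlongrightarrow> \<zeta>) (at_right 0)"
    unfolding z_def by (auto intro!: tendsto_eq_intros)
  then have "(A \<longlongrightarrow> cnj b * h \<zeta> * (- \<zeta>) ^ m * v ^ m) (at_right 0)"
    unfolding A_def u_def power_mult_distrib mult.assoc
    by (intro tendsto_intros isCont_tendsto_compose[OF \<open>isCont h \<zeta>\<close>])
  then have "eventually (\<lambda>t. Re (A t) > 0) (at_right 0)"
    using v(3) by (intro order_tendstoD(1)[OF tendsto_Re])
  moreover have "eventually (\<lambda>t. t \<in> {0<..<min r (2 * Re v)}) (at_right 0)"
    using \<open>r > 0\<close> v(2) by (intro eventually_at_right_real) simp
  ultimately obtain t where t: "Re (A t) > 0" "0 < t" "t < r" "t < 2 * Re v"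
    using eventually_happens[OF eventually_conj] by force
  have "z t \<in> ball \<zeta> r"
    using t assms(1) v(1) by (simp add: z_def dist_norm algebra_simps norm_mult)
  moreover have "norm (z t) < 1"
    using norm_1_minus_of_real_mult_lt_1[OF v(1) t(2,4)] assms(1) by (simp add: z_def norm_mult)
  moreover have "norm (\<phi> (z t)) > 1"
  proof -
    have "\<phi> (z t) = b + (z t - \<zeta>) ^ m * h (z t)"
      using fac[OF \<open>z t \<in> ball \<zeta> r\<close>] by (simp add: b_def algebra_simps)
    moreover have "z t - \<zeta> = of_real t * u"
      by (simp add: z_def u_def algebra_simps)
    then have "cnj b * ((z t - \<zeta>) ^ m * h (z t)) = of_real (t ^ m) * A t"
      by (simp add: A_def power_mult_distrib mult_ac)
    then have "Re (cnj b * ((z t - \<zeta>) ^ m * h (z t))) > 0"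
      using t(1,2) by simp
    ultimately show ?thesis
      using norm_add_gt_1_if_Re_cnj_mult_pos[of b] assms(2) by (simp add: b_def)
  qed
  ultimately show False
    using into_disc by fastforce
qed

lemma rational_and_phi_e_holomorphic_near:
  fixes p q :: "complex poly"
  assumes \<phi>: "\<And>z. \<phi> z = poly p z / poly q z" and "norm \<zeta> = 1" "\<phi> \<zeta> \<noteq> 0"
  obtains r where "r > 0" "\<phi> holomorphic_on ball \<zeta> r" "phi_e \<phi> holomorphic_on ball \<zeta> r"
proof -
  define pc where "pc = map_poly cnj p"
  define qc where "qc = map_poly cnj q"
  have phi_e: "phi_e \<phi> = (\<lambda>z. poly qc (1 / z) / poly pc (1 / z))"
    by (simp add: fun_eq_iff phi_e_def rho_def \<phi> pc_def qc_def)
  have "\<zeta> \<noteq> 0" "poly q \<zeta> \<noteq> 0" "poly pc (1 / \<zeta>) \<noteq> 0"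
    using assms one_div_cnj_of_norm_1[OF assms(2)] by (auto simp: pc_def)
  moreover have "isCont (\<lambda>z. poly pc (1 / z)) \<zeta>"
    using \<open>\<zeta> \<noteq> 0\<close> by (intro continuous_intros isCont_o2[of "\<lambda>z. 1 / z"]) auto
  moreover have nonzero_near: "eventually (\<lambda>z. f z \<noteq> 0) (nhds \<zeta>)"
    if "isCont f \<zeta>" "f \<zeta> \<noteq> 0" for f :: "complex \<Rightarrow> complex"
    using that by (auto simp: isCont_def tendsto_at_iff_tendsto_nhds intro: tendsto_imp_eventually_ne)
  ultimately have "eventually (\<lambda>z. z \<noteq> 0 \<and> poly q z \<noteq> 0 \<and> poly pc (1 / z) \<noteq> 0) (nhds \<zeta>)"
    by (intro eventually_conj nonzero_near) auto
  then obtain r where "r > 0" and r: "\<And>z. z \<in> ball \<zeta> r \<Longrightarrow> z \<noteq> 0 \<and> poly q z \<noteq> 0 \<and> poly pc (1 / z) \<noteq> 0"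
    by (auto simp: eventually_nhds_metric dist_commute)
  show thesis
  proof
    show "\<phi> holomorphic_on ball \<zeta> r"
      unfolding \<phi>[abs_def] using r by (intro holomorphic_intros) auto
    show "phi_e \<phi> holomorphic_on ball \<zeta> r"
      unfolding phi_e using r by (intro holomorphic_intros) auto
  qed fact
qed

lemma order_of_contact_obtains_point_mapped_inside:
  assumes "order_of_contact \<phi> n \<zeta>" "norm \<zeta> = 1" "isCont \<phi> \<zeta>" "r > 0"
  obtains w where "w \<in> ball \<zeta> r" "norm w = 1" "\<phi> w \<noteq> 0" "norm (\<phi> w) < 1"
proof -
  define F where "F = at \<zeta> within sphere (0::complex) 1"
  define ratio where "ratio = (\<lambda>w. (1 - (norm (\<phi> w))\<^sup>2) / (norm (\<phi> \<zeta> - \<phi> w)) ^ n)"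
  obtain c C where "norm (\<phi> \<zeta>) = 1" "c > 0" and bounds: "eventually (\<lambda>w. c \<le> ratio w \<and> ratio w \<le> C) F"
    using assms(1) unfolding order_of_contact_def F_def ratio_def by blast
  have "(\<phi> \<longlongrightarrow> \<phi> \<zeta>) F"
    unfolding F_def using assms(3) continuous_at_imp_continuous_at_within continuous_within by blast
  then have "eventually (\<lambda>w. \<phi> w \<noteq> 0) F"
    using \<open>norm (\<phi> \<zeta>) = 1\<close> by (intro tendsto_imp_eventually_ne) auto
  moreover have "eventually (\<lambda>w. w \<in> ball \<zeta> r \<and> w \<noteq> \<zeta> \<and> w \<in> sphere 0 1) F"
    unfolding F_def using \<open>r > 0\<close> by (rule eventually_at_ball')
  moreover have "F \<noteq> bot"
    unfolding F_def using \<open>norm \<zeta> = 1\<close> by (intro at_within_sphere_nontrivial) auto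
  ultimately obtain w where "w \<in> ball \<zeta> r" "norm w = 1" "\<phi> w \<noteq> 0" "c \<le> ratio w"
    using bounds eventually_happens[OF eventually_conj[OF eventually_conj]] by force
  moreover have "norm (\<phi> w) < 1"
  proof -
    have "ratio w > 0"
      using \<open>c \<le> ratio w\<close> \<open>c > 0\<close> by linarith
    then have "1 - (norm (\<phi> w))\<^sup>2 > 0"
      by (simp add: ratio_def zero_less_divide_iff not_less[symmetric])
    then show ?thesis
      by (simp add: power_less_one_iff)
  qed
  ultimately show thesis
    using that by blast
qed

lemma order_of_contact_eq_vanishing_order:
  fixes \<phi> g h :: "complex \<Rightarrow> complex"
  assumes contact: "order_of_contact \<phi> n \<zeta>" and "norm \<zeta> = 1" "r > 0"
    and fac_diff: "\<And>w. w \<in> ball \<zeta> r \<Longrightarrow> \<phi> w - phi_e \<phi> w = (w - \<zeta>) ^ k * g w"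
    and fac_\<phi>: "\<And>w. w \<in> ball \<zeta> r \<Longrightarrow> \<phi> w - \<phi> \<zeta> = (w - \<zeta>) * h w"
    and "isCont \<phi> \<zeta>" "isCont g \<zeta>" "isCont h \<zeta>" "g \<zeta> \<noteq> 0" "h \<zeta> \<noteq> 0"
  shows "k = n"
proof -
  define F where "F = at \<zeta> within sphere (0::complex) 1"
  define ratio where "ratio = (\<lambda>w. (1 - (norm (\<phi> w))\<^sup>2) / (norm (\<phi> \<zeta> - \<phi> w)) ^ n)"
  obtain c C where "norm (\<phi> \<zeta>) = 1" "c > 0" and bounds: "eventually (\<lambda>w. c \<le> ratio w \<and> ratio w \<le> C) F"
    using contact unfolding order_of_contact_def F_def ratio_def by blast
  have lim: "(f \<longlongrightarrow> f \<zeta>) F" if "isCont f \<zeta>" for f :: "complex \<Rightarrow> complex"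
    unfolding F_def using that continuous_at_imp_continuous_at_within continuous_within by blast
  have "eventually (\<lambda>w. \<phi> w \<noteq> 0) F"
    using lim[OF \<open>isCont \<phi> \<zeta>\<close>] \<open>norm (\<phi> \<zeta>) = 1\<close> by (intro tendsto_imp_eventually_ne) auto
  moreover have "eventually (\<lambda>w. w \<in> ball \<zeta> r \<and> w \<noteq> \<zeta> \<and> w \<in> sphere 0 1) F"
    unfolding F_def using \<open>r > 0\<close> by (rule eventually_at_ball')
  ultimately have "eventually (\<lambda>w. c \<le> norm (w - \<zeta>) ^ k * (norm (g w) * norm (\<phi> w)) /
      (norm (w - \<zeta>) ^ n * norm (h w) ^ n) \<and>
      norm (w - \<zeta>) ^ k * (norm (g w) * norm (\<phi> w)) / (norm (w - \<zeta>) ^ n * norm (h w) ^ n) \<le> C) F"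
    using bounds
  proof eventually_elim
    case (elim w)
    have "ratio w > 0"
      using elim \<open>c > 0\<close> by linarith
    then have "1 - (norm (\<phi> w))\<^sup>2 > 0"
      by (simp add: ratio_def zero_less_divide_iff not_less[symmetric])
    moreover have "norm (\<phi> w) * norm (\<phi> w - phi_e \<phi> w) = \<bar>1 - (norm (\<phi> w))\<^sup>2\<bar>"
      using elim phi_e_on_sphere[of w \<phi>] norm_mult_norm_sub_one_div_cnj[of "\<phi> w"] by simp
    ultimately have "1 - (norm (\<phi> w))\<^sup>2 = norm (w - \<zeta>) ^ k * (norm (g w) * norm (\<phi> w))"
      using fac_diff[of w] elim by (simp add: norm_mult norm_power mult_ac)
    moreover have "norm (\<phi> \<zeta> - \<phi> w) = norm (w - \<zeta>) * norm (h w)"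
      using fac_\<phi>[of w] elim by (simp add: norm_minus_commute[of "\<phi> \<zeta>"] norm_mult)
    ultimately show ?case
      using elim by (simp add: ratio_def power_mult_distrib)
  qed
  moreover have "F \<noteq> bot"
    unfolding F_def using \<open>norm \<zeta> = 1\<close> by (intro at_within_sphere_nontrivial) auto
  moreover have "((\<lambda>w. norm (w - \<zeta>)) \<longlongrightarrow> 0) F"
    using tendsto_norm[OF lim[of "\<lambda>w. w - \<zeta>"]] by simp
  moreover have "eventually (\<lambda>w. norm (w - \<zeta>) > 0) F"
    unfolding F_def eventually_at_filter by simp
  moreover have "((\<lambda>w. norm (g w) * norm (\<phi> w)) \<longlongrightarrow> norm (g \<zeta>) * norm (\<phi> \<zeta>)) F"
    by (intro tendsto_intros lim assms)
  moreover have "((\<lambda>w. norm (h w) ^ n) \<longlongrightarrow> norm (h \<zeta>) ^ n) F"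
    by (intro tendsto_intros lim assms)
  moreover have "norm (g \<zeta>) * norm (\<phi> \<zeta>) > 0" "norm (h \<zeta>) ^ n > 0"
    using assms \<open>norm (\<phi> \<zeta>) = 1\<close> by auto
  ultimately show "k = n"
    using exponents_eq_if_ratio_bounded \<open>c > 0\<close> by blast
qed

lemma holomorphic_factor_zero_in_ball:
  fixes f :: "complex \<Rightarrow> complex"
  assumes "f holomorphic_on ball \<zeta> r" "f \<zeta> = 0" "w \<in> ball \<zeta> r" "f w \<noteq> 0"
  obtains k s g where "0 < k" "0 < s" "ball \<zeta> s \<subseteq> ball \<zeta> r" "g holomorphic_on ball \<zeta> s" "g \<zeta> \<noteq> 0"
    "\<And>z. z \<in> ball \<zeta> s \<Longrightarrow> f z = (z - \<zeta>) ^ k * g z"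
proof -
  have "\<zeta> \<in> ball \<zeta> r"
    using assms(3) by (metis centre_in_ball ball_eq_empty empty_iff not_le)
  moreover have "\<not> f constant_on ball \<zeta> r"
    using assms(2-4) calculation by (intro not_constant_onI[of f w \<zeta>]) auto
  ultimately show thesis
    using holomorphic_factor_zero_nonconstant[OF assms(1) open_ball connected_ball _ assms(2)] that
    by (metis centre_in_ball)
qed

lemma phi_e_difference_factor:
  assumes hol: "\<phi> holomorphic_on ball \<zeta> r" "phi_e \<phi> holomorphic_on ball \<zeta> r"
    and "norm \<zeta> = 1" "norm (\<phi> \<zeta>) = 1"
    and "w \<in> ball \<zeta> r" "norm w = 1" "\<phi> w \<noteq> 0" "norm (\<phi> w) < 1"
  obtains k s g where "0 < k" "0 < s" "ball \<zeta> s \<subseteq> ball \<zeta> r" "g holomorphic_on ball \<zeta> s" "g \<zeta> \<noteq> 0"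
    "\<And>z. z \<in> ball \<zeta> s \<Longrightarrow> \<phi> z - phi_e \<phi> z = (z - \<zeta>) ^ k * g z"
proof (rule holomorphic_factor_zero_in_ball[OF _ _ \<open>w \<in> ball \<zeta> r\<close>])
  show "(\<lambda>z. \<phi> z - phi_e \<phi> z) holomorphic_on ball \<zeta> r"
    using hol by (intro holomorphic_intros)
  show "\<phi> \<zeta> - phi_e \<phi> \<zeta> = 0"
    using assms(3,4) by (simp add: phi_e_on_sphere one_div_cnj_of_norm_1)
  show "\<phi> w - phi_e \<phi> w \<noteq> 0" \<comment> \<open>this needs \<phi> w \<noteq> 0, as 1 / cnj 0 = 0\<close>
    using norm_mult_norm_sub_one_div_cnj[of "\<phi> w"] assms(6-8)
    by (auto simp: phi_e_on_sphere abs_square_eq_1)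
qed (rule that)

lemma disc_selfmap_boundary_simple_factor:
  fixes \<phi> :: "complex \<Rightarrow> complex"
  assumes hol: "\<phi> holomorphic_on ball \<zeta> r" and "norm \<zeta> = 1" "norm (\<phi> \<zeta>) = 1"
    and into_disc: "\<And>z. z \<in> ball \<zeta> r \<Longrightarrow> norm z < 1 \<Longrightarrow> norm (\<phi> z) \<le> 1"
    and "w \<in> ball \<zeta> r" "\<phi> w \<noteq> \<phi> \<zeta>"
  obtains s h where "0 < s" "ball \<zeta> s \<subseteq> ball \<zeta> r" "isCont h \<zeta>" "h \<zeta> \<noteq> 0"
    "\<And>z. z \<in> ball \<zeta> s \<Longrightarrow> \<phi> z - \<phi> \<zeta> = (z - \<zeta>) * h z"
proof -
  have "(\<lambda>z. \<phi> z - \<phi> \<zeta>) holomorphic_on ball \<zeta> r"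
    using hol by (intro holomorphic_intros)
  then obtain m s h where "0 < m" "0 < s" and s: "ball \<zeta> s \<subseteq> ball \<zeta> r"
    and hol_h: "h holomorphic_on ball \<zeta> s" "h \<zeta> \<noteq> 0"
    and fac: "\<And>z. z \<in> ball \<zeta> s \<Longrightarrow> \<phi> z - \<phi> \<zeta> = (z - \<zeta>) ^ m * h z"
    by (rule holomorphic_factor_zero_in_ball[OF _ _ assms(5)]) (use assms(6) in auto)
  have "isCont h \<zeta>"
    using hol_h(1) \<open>0 < s\<close> by (rule isCont_if_holomorphic_on_ball)
  have "m = 1"
    using s into_disc by (intro disc_selfmap_boundary_zero_order_eq_1[OF assms(2,3) \<open>0 < s\<close> \<open>0 < m\<close> _ fac
          \<open>isCont h \<zeta>\<close> hol_h(2)]) auto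
  then show thesis
    using that \<open>0 < s\<close> s \<open>isCont h \<zeta>\<close> hol_h(2) fac by simp
qed

lemma order_of_contact_reflection_difference_factor:
  assumes "rational_selfmap_disc \<phi>" "norm \<zeta> = 1" "order_of_contact \<phi> n \<zeta>"
  obtains r g where "0 < n" "0 < r" "\<phi> holomorphic_on ball \<zeta> r" "phi_e \<phi> holomorphic_on ball \<zeta> r"
    "g holomorphic_on ball \<zeta> r" "g \<zeta> \<noteq> 0"
    "\<And>w. w \<in> ball \<zeta> r \<Longrightarrow> \<phi> w - phi_e \<phi> w = (w - \<zeta>) ^ n * g w"
proof -
  obtain p q where \<phi>: "\<And>z. \<phi> z = poly p z / poly q z" and disc: "\<And>z. z \<in> ball 0 1 \<Longrightarrow> \<phi> z \<in> ball 0 1"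
    using assms(1) unfolding rational_selfmap_disc_def by blast
  have "norm (\<phi> \<zeta>) = 1"
    using assms(3) unfolding order_of_contact_def by blast
  then have "\<phi> \<zeta> \<noteq> 0"
    by auto
  then obtain r0 where "0 < r0" and hol: "\<phi> holomorphic_on ball \<zeta> r0" "phi_e \<phi> holomorphic_on ball \<zeta> r0"
    by (rule rational_and_phi_e_holomorphic_near[OF \<phi> \<open>norm \<zeta> = 1\<close>])
  obtain w where w: "w \<in> ball \<zeta> r0" "norm w = 1" "\<phi> w \<noteq> 0" "norm (\<phi> w) < 1"
    using order_of_contact_obtains_point_mapped_inside[OF assms(3,2) isCont_if_holomorphic_on_ball[OF hol(1)]]
      \<open>0 < r0\<close> by blast
  obtain k r g where "0 < k" "0 < r" and r: "ball \<zeta> r \<subseteq> ball \<zeta> r0"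
    and hol_g: "g holomorphic_on ball \<zeta> r" "g \<zeta> \<noteq> 0"
    and fac: "\<And>z. z \<in> ball \<zeta> r \<Longrightarrow> \<phi> z - phi_e \<phi> z = (z - \<zeta>) ^ k * g z"
    using phi_e_difference_factor[OF hol \<open>norm \<zeta> = 1\<close> \<open>norm (\<phi> \<zeta>) = 1\<close> w] by blast
  have "norm (\<phi> z) \<le> 1" if "z \<in> ball \<zeta> r0" "norm z < 1" for z
    using disc[of z] that(2) by simp
  moreover have "\<phi> w \<noteq> \<phi> \<zeta>"
    using w(4) \<open>norm (\<phi> \<zeta>) = 1\<close> by auto
  ultimately obtain s h where "0 < s" "ball \<zeta> s \<subseteq> ball \<zeta> r0" "isCont h \<zeta>" "h \<zeta> \<noteq> 0"
    and fac_\<phi>: "\<And>z. z \<in> ball \<zeta> s \<Longrightarrow> \<phi> z - \<phi> \<zeta> = (z - \<zeta>) * h z"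
    using disc_selfmap_boundary_simple_factor[OF hol(1) \<open>norm \<zeta> = 1\<close> \<open>norm (\<phi> \<zeta>) = 1\<close> _ w(1)] by blast
  have "k = n"
  proof (rule order_of_contact_eq_vanishing_order[OF assms(3) \<open>norm \<zeta> = 1\<close>])
    show "0 < min r s"
      using \<open>0 < r\<close> \<open>0 < s\<close> by simp
    show "\<phi> z - phi_e \<phi> z = (z - \<zeta>) ^ k * g z" if "z \<in> ball \<zeta> (min r s)" for z
      using fac[of z] that by simp
    show "\<phi> z - \<phi> \<zeta> = (z - \<zeta>) * h z" if "z \<in> ball \<zeta> (min r s)" for z
      using fac_\<phi>[of z] that by simp
  qed (use isCont_if_holomorphic_on_ball[OF hol(1) \<open>0 < r0\<close>] isCont_if_holomorphic_on_ball[OF hol_g(1) \<open>0 < r\<close>]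
        \<open>isCont h \<zeta>\<close> hol_g(2) \<open>h \<zeta> \<noteq> 0\<close> in auto)
  show thesis
  proof (rule that)
    show "\<phi> holomorphic_on ball \<zeta> r" "phi_e \<phi> holomorphic_on ball \<zeta> r"
      using hol r by (auto intro: holomorphic_on_subset)
    show "\<phi> z - phi_e \<phi> z = (z - \<zeta>) ^ n * g z" if "z \<in> ball \<zeta> r" for z
      using fac[OF that] \<open>k = n\<close> by simp
  qed (use \<open>0 < k\<close> \<open>k = n\<close> \<open>0 < r\<close> hol_g in auto)
qed

theorem mainTheorem11:
  fixes \<phi> :: "complex \<Rightarrow> complex" and n :: nat and \<zeta> :: complex
  assumes "rational_selfmap_disc \<phi>"
    and "\<zeta> \<in> sphere 0 1"
    and "even n"
    and "order_of_contact \<phi> n \<zeta>"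
  shows "Dvec (n - 1) \<phi> \<zeta> = Dvec (n - 1) (phi_e \<phi>) \<zeta>
         \<and> (deriv ^^ n) \<phi> \<zeta> \<noteq> (deriv ^^ n) (phi_e \<phi>) \<zeta>"
proof -
  obtain r g where "0 < n" "0 < r" and hol: "\<phi> holomorphic_on ball \<zeta> r" "phi_e \<phi> holomorphic_on ball \<zeta> r"
    and "g holomorphic_on ball \<zeta> r" "g \<zeta> \<noteq> 0"
    and fac: "\<And>w. w \<in> ball \<zeta> r \<Longrightarrow> \<phi> w - phi_e \<phi> w = (w - \<zeta>) ^ n * g w"
    using order_of_contact_reflection_difference_factor[OF assms(1) _ assms(4)] assms(2) by auto
  have diff: "(deriv ^^ i) \<phi> \<zeta> - (deriv ^^ i) (phi_e \<phi>) \<zeta>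
      = (if n \<le> i then of_nat (i choose n) * fact n * (deriv ^^ (i - n)) g \<zeta> else 0)" for i
    using higher_deriv_diff[OF hol open_ball, of \<zeta> i] \<open>0 < r\<close>
      higher_deriv_power_factor[OF \<open>0 < r\<close> \<open>g holomorphic_on ball \<zeta> r\<close> fac, of i] by simp
  have "Dvec (n - 1) \<phi> \<zeta> = Dvec (n - 1) (phi_e \<phi>) \<zeta>"
    unfolding Dvec_def
  proof (intro map_cong refl)
    fix j
    assume "j \<in> set [0..<Suc (n - 1)]"
    then show "(deriv ^^ j) \<phi> \<zeta> = (deriv ^^ j) (phi_e \<phi>) \<zeta>"
      using diff[of j] \<open>0 < n\<close> by simp
  qed
  moreover have "(deriv ^^ n) \<phi> \<zeta> \<noteq> (deriv ^^ n) (phi_e \<phi>) \<zeta>"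
    using diff[of n] \<open>g \<zeta> \<noteq> 0\<close> by auto
  ultimately show ?thesis ..
qed

end
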